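(* Let $G$ be a finite group which is a $2$-closed group. Then the center $Z(G)$ of $G$ is cyclic.
   Context: Permutations act on the right; $\alpha^g$ denotes the image of $\alpha$ under $g$. For a set $\Omega$ and $G\leq{\rm Sym}(\Omega)$, the $2$-closure of $G$ on $\Omega$ is $G^{(2),\Omega}=\{\theta\in{\rm Sym}(\Omega)\mid \forall \alpha,\beta\in\Omega\ \exists g\in G:\ \alpha^\theta=\alpha^g,\ \beta^\theta=\beta^g\}$. $G$ is called $2$-closed on $\Omega$ if $G=G^{(2),\Omega}$. An abstract group $G$ is called a $2$-closed group if $H=H^{(2),\Omega}$ for every set $\Omega$ and every subgroup $H\leq{\rm Sym}(\Omega)$ with $H\cong G$ (i.e. $G$ is $2$-closed in all of its faithful permutation representations). *)

theory Defs
  imports "HOL-Algebra.Algebra"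
begin

definition group_center :: "('a, 'b) monoid_scheme \<Rightarrow> 'a set" where
  "group_center G = {z \<in> carrier G. \<forall>g \<in> carrier G. z \<otimes>\<^bsub>G\<^esub> g = g \<otimes>\<^bsub>G\<^esub> z}"

(* 2-closure of H \<le> Sym(\<Omega>) on \<Omega>; permutations are the elements of Bij \<Omega>,
   and \<alpha>^g is written g \<alpha>. *)
definition two_closure :: "'c set \<Rightarrow> ('c \<Rightarrow> 'c) set \<Rightarrow> ('c \<Rightarrow> 'c) set" where
  "two_closure \<Omega> H = {\<theta> \<in> Bij \<Omega>. \<forall>\<alpha>\<in>\<Omega>. \<forall>\<beta>\<in>\<Omega>. \<exists>g\<in>H. \<theta> \<alpha> = g \<alpha> \<and> \<theta> \<beta> = g \<beta>}"

definition two_closed_on :: "'c set \<Rightarrow> ('c \<Rightarrow> 'c) set \<Rightarrow> bool" where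
  "two_closed_on \<Omega> H \<longleftrightarrow> H = two_closure \<Omega> H"

(* An abstract group G is 2-closed if every permutation group isomorphic to G is
   2-closed. Permutation domains are taken to be subsets of nat. *)
definition two_closed_group :: "('a, 'b) monoid_scheme \<Rightarrow> bool" where
  "two_closed_group G \<longleftrightarrow>
     (\<forall>(\<Omega>::nat set) H. subgroup H (BijGroup \<Omega>) \<and> G \<cong> (BijGroup \<Omega>)\<lparr>carrier := H\<rparr>
        \<longrightarrow> two_closed_on \<Omega> H)"

end

theory Submission
  imports Defs "HOL-Computational_Algebra.Primes"
begin

text \<open>
  If \<open>Z(G)\<close> is not cyclic, it contains elements \<open>a\<close>, \<open>b\<close> with
  \<open>\<langle>a\<rangle> \<inter> \<langle>b\<rangle> = 1\<close> and \<open>a \<notin> \<langle>ab\<rangle>\<close>: take \<open>a\<close> of maximal order,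
  so that every order divides \<open>ord a\<close>, and \<open>b\<close> of prime order outside \<open>\<langle>a\<rangle>\<close>.
  Let \<open>G\<close> act by left multiplication on the disjoint union of the coset spaces of
  \<open>\<langle>a\<rangle>\<close>, \<open>\<langle>b\<rangle>\<close> and \<open>\<langle>ab\<rangle>\<close>; the action is faithful. Since these subgroups
  are central, multiplying by any element of one of them fixes every coset of it. So the
  permutation that multiplies the cosets of \<open>\<langle>ab\<rangle>\<close> by \<open>a\<close> and fixes the other two
  orbits agrees on any two orbits with one of \<open>1\<close>, \<open>a\<close>, \<open>b\<inverse>\<close>, hence lies in the
  2-closure, yet it is induced by no element of \<open>G\<close>.
\<close>

subsection \<open>Transport of permutation groups along injections\<close>

text \<open>\<open>two_closed_group\<close> only tests permutation groups on sets of naturals, so a finite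
  action is transported along an injection into \<open>nat\<close>.\<close>

definition transport_perm :: "('c \<Rightarrow> 'd) \<Rightarrow> 'c set \<Rightarrow> ('c \<Rightarrow> 'c) \<Rightarrow> 'd \<Rightarrow> 'd" where
  "transport_perm f E \<sigma> = (\<lambda>y \<in> f ` E. f (\<sigma> (inv_into E f y)))"

lemma transport_perm_apply [simp]:
  "inj_on f E \<Longrightarrow> x \<in> E \<Longrightarrow> transport_perm f E \<sigma> (f x) = f (\<sigma> x)"
  by (simp add: transport_perm_def)

lemma transport_perm_Bij:
  assumes f: "inj_on f E" and \<sigma>: "\<sigma> \<in> Bij E"
  shows "transport_perm f E \<sigma> \<in> Bij (f ` E)"
proof -
  have f': "bij_betw f E (f ` E)"
    using f by (rule inj_on_imp_bij_betw)
  have "bij_betw \<sigma> E E"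
    using \<sigma> by (simp add: Bij_def)
  then have "bij_betw (f \<circ> (\<sigma> \<circ> inv_into E f)) (f ` E) (f ` E)"
    using f' by (blast intro: bij_betw_trans bij_betw_inv_into)
  then have "bij_betw (transport_perm f E \<sigma>) (f ` E) (f ` E)"
    by (rule bij_betw_cong[THEN iffD1, rotated]) (simp add: transport_perm_def)
  then show ?thesis
    by (simp add: Bij_def transport_perm_def)
qed

lemma transport_perm_hom:
  assumes f: "inj_on f E"
  shows "transport_perm f E \<in> hom (BijGroup E) (BijGroup (f ` E))"
proof (rule homI)
  fix \<sigma> \<tau> assume "\<sigma> \<in> carrier (BijGroup E)" and "\<tau> \<in> carrier (BijGroup E)"
  then have \<sigma>: "\<sigma> \<in> Bij E" and \<tau>: "\<tau> \<in> Bij E"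
    by (simp_all add: BijGroup_def)
  have "transport_perm f E (compose E \<sigma> \<tau>) y = compose (f ` E) (transport_perm f E \<sigma>) (transport_perm f E \<tau>) y"
    for y
  proof (cases "y \<in> f ` E")
    case True
    then obtain x where "x \<in> E" "y = f x" by blast
    moreover have "\<tau> x \<in> E"
      using \<open>x \<in> E\<close> \<tau> Bij_imp_funcset by blast
    ultimately show ?thesis
      using f by (simp add: compose_def)
  qed (simp add: transport_perm_def compose_def)
  then show "transport_perm f E (\<sigma> \<otimes>\<^bsub>BijGroup E\<^esub> \<tau>)
      = transport_perm f E \<sigma> \<otimes>\<^bsub>BijGroup (f ` E)\<^esub> transport_perm f E \<tau>"
    using \<sigma> \<tau> f by (simp add: BijGroup_def transport_perm_Bij fun_eq_iff)
qed (use f transport_perm_Bij in \<open>auto simp: BijGroup_def\<close>)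

lemma inj_on_transport_perm:
  assumes f: "inj_on f E"
  shows "inj_on (transport_perm f E) (Bij E)"
proof (rule inj_onI, rule extensionalityI)
  fix \<sigma> \<tau> x assume \<sigma>: "\<sigma> \<in> Bij E" and \<tau>: "\<tau> \<in> Bij E"
    and eq: "transport_perm f E \<sigma> = transport_perm f E \<tau>" and x: "x \<in> E"
  then have "f (\<sigma> x) = f (\<tau> x)"
    using f by (metis transport_perm_apply)
  moreover have "\<sigma> x \<in> E" "\<tau> x \<in> E"
    using \<sigma> \<tau> x Bij_imp_funcset by blast+
  ultimately show "\<sigma> x = \<tau> x"
    using f by (simp add: inj_on_eq_iff)
qed (auto simp: Bij_def)

lemma transport_perm_two_closure:
  assumes f: "inj_on f E" and \<theta>: "\<theta> \<in> two_closure E H"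
  shows "transport_perm f E \<theta> \<in> two_closure (f ` E) (transport_perm f E ` H)"
  unfolding two_closure_def
proof (intro CollectI conjI ballI)
  show "transport_perm f E \<theta> \<in> Bij (f ` E)"
    using \<theta> f by (simp add: two_closure_def transport_perm_Bij)
next
  fix \<alpha> \<beta> assume "\<alpha> \<in> f ` E" "\<beta> \<in> f ` E"
  then obtain x y where xy: "x \<in> E" "y \<in> E" "\<alpha> = f x" "\<beta> = f y" by blast
  then obtain g where "g \<in> H" "\<theta> x = g x" "\<theta> y = g y"
    using \<theta> by (auto simp: two_closure_def)
  with f xy show "\<exists>g'\<in>transport_perm f E ` H.
      transport_perm f E \<theta> \<alpha> = g' \<alpha> \<and> transport_perm f E \<theta> \<beta> = g' \<beta>"
    by (intro bexI[of _ "transport_perm f E g"]) simp_all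
qed

lemma subset_two_closure: "H \<subseteq> Bij \<Omega> \<Longrightarrow> H \<subseteq> two_closure \<Omega> H"
  by (auto simp: two_closure_def)

lemma (in faithful_action) two_closed_group_imp_two_closed_on:
  assumes fin: "finite E" and closed: "two_closed_group G"
  shows "two_closed_on E (\<phi> ` carrier G)"
proof -
  obtain f :: "_ \<Rightarrow> nat" where f: "inj_on f E"
    using fin ex_bij_betw_finite_nat bij_betw_imp_inj_on by blast
  let ?T = "transport_perm f E"
  let ?H = "(?T \<circ> \<phi>) ` carrier G"
  have \<phi>Bij: "\<phi> ` carrier G \<subseteq> Bij E"
    using bij_prop0 by blast
  have hom: "?T \<circ> \<phi> \<in> hom G (BijGroup (f ` E))"
    by (rule hom_compose[OF group_hom.homh[OF group_hom] transport_perm_hom[OF f]])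
  have inj: "inj_on (?T \<circ> \<phi>) (carrier G)"
    by (rule comp_inj_on[OF faithful inj_on_subset[OF inj_on_transport_perm[OF f] \<phi>Bij]])
  have "group_hom G (BijGroup (f ` E)) (?T \<circ> \<phi>)"
    using hom group_hom by (simp add: group_BijGroup group_hom_def group_hom_axioms_def)
  then have sub: "subgroup ?H (BijGroup (f ` E))"
    by (rule group_hom.img_is_subgroup)
  have "?T \<circ> \<phi> \<in> iso G ((BijGroup (f ` E))\<lparr>carrier := ?H\<rparr>)"
    using hom inj unfolding iso_def hom_def bij_betw_def by simp
  then have "two_closed_on (f ` E) ?H"
    using closed sub unfolding two_closed_group_def by (meson is_isoI)
  then have closure: "two_closure (f ` E) (?T ` \<phi> ` carrier G) = ?T ` \<phi> ` carrier G"
    by (simp add: two_closed_on_def image_comp)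
  have "two_closure E (\<phi> ` carrier G) \<subseteq> \<phi> ` carrier G"
  proof
    fix \<theta> assume \<theta>: "\<theta> \<in> two_closure E (\<phi> ` carrier G)"
    then obtain \<sigma> where "\<sigma> \<in> \<phi> ` carrier G" "?T \<theta> = ?T \<sigma>"
      using transport_perm_two_closure[OF f \<theta>] closure by auto
    moreover have "\<theta> \<in> Bij E"
      using \<theta> by (simp add: two_closure_def)
    ultimately show "\<theta> \<in> \<phi> ` carrier G"
      using inj_on_transport_perm[OF f] \<phi>Bij by (metis inj_onD subsetD)
  qed
  then show ?thesis
    using subset_two_closure[OF \<phi>Bij] by (simp add: two_closed_on_def)
qed

subsection \<open>Actions on unions of coset spaces of central subgroups\<close>

lemma (in group) subgroup_group_center: "subgroup (group_center G) G"
proof (rule subgroupI)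
  fix x y assume x: "x \<in> group_center G" and y: "y \<in> group_center G"
  then have xc: "x \<in> carrier G" and yc: "y \<in> carrier G"
    and xg: "\<And>g. g \<in> carrier G \<Longrightarrow> x \<otimes> g = g \<otimes> x"
    and yg: "\<And>g. g \<in> carrier G \<Longrightarrow> y \<otimes> g = g \<otimes> y"
    by (auto simp: group_center_def)
  have "inv x \<otimes> g = g \<otimes> inv x" if g: "g \<in> carrier G" for g
  proof -
    have "inv x \<otimes> g = inv x \<otimes> (g \<otimes> x) \<otimes> inv x"
      using xc g by (simp add: m_assoc)
    also have "\<dots> = g \<otimes> inv x"
      using xc g by (simp add: xg[OF g, symmetric] flip: m_assoc)
    finally show ?thesis .
  qed
  then show "inv x \<in> group_center G"
    using xc by (simp add: group_center_def)
  have "x \<otimes> y \<otimes> g = g \<otimes> (x \<otimes> y)" if g: "g \<in> carrier G" for g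
  proof -
    have "x \<otimes> y \<otimes> g = x \<otimes> g \<otimes> y"
      using xc yc g by (simp add: m_assoc yg[OF g])
    also have "\<dots> = g \<otimes> (x \<otimes> y)"
      using xc yc g by (simp add: m_assoc xg[OF g])
    finally show ?thesis .
  qed
  then show "x \<otimes> y \<in> group_center G"
    using xc yc by (simp add: group_center_def)
qed (auto simp: group_center_def)

lemma (in group) l_coset_eq_iff:
  assumes H: "subgroup H G" and x: "x \<in> carrier G" and y: "y \<in> carrier G"
  shows "x <# H = y <# H \<longleftrightarrow> inv y \<otimes> x \<in> H"
proof
  assume eq: "x <# H = y <# H"
  have "x \<in> x <# H"
    using H x by (auto simp: l_coset_def intro!: bexI[of _ \<one>] subgroup.one_closed)
  then obtain h where "h \<in> H" "x = y \<otimes> h"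
    using eq by (auto simp: l_coset_def)
  then show "inv y \<otimes> x \<in> H"
    using H y by (simp add: subgroup.mem_carrier flip: m_assoc)
next
  assume h: "inv y \<otimes> x \<in> H"
  have "x <# H = y <# ((inv y \<otimes> x) <# H)"
    using H x y by (simp add: lcos_m_assoc subgroup.subset flip: m_assoc)
  also have "\<dots> = y <# H"
    using H x y h by (simp add: coset_join3)
  finally show "x <# H = y <# H" .
qed

lemma (in group) l_coset_central_mult:
  assumes K: "subgroup K G" "K \<subseteq> group_center G" and k: "k \<in> K" and x: "x \<in> carrier G"
  shows "(k \<otimes> x) <# K = x <# K"
proof -
  have kc: "k \<in> carrier G"
    using K(1) k by (rule subgroup.mem_carrier)
  have "k \<otimes> x = x \<otimes> k"
    using K(2) k x unfolding group_center_def by blast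
  also have "(x \<otimes> k) <# K = x <# (k <# K)"
    using subgroup.subset[OF K(1)] x kc by (rule lcos_m_assoc[symmetric])
  also have "k <# K = K"
    using kc K(1) k by (rule coset_join3)
  finally show ?thesis .
qed

definition coset_union :: "('a, 'b) monoid_scheme \<Rightarrow> 'i set \<Rightarrow> ('i \<Rightarrow> 'a set) \<Rightarrow> ('i \<times> 'a set) set"
  where "coset_union G I K = (SIGMA i:I. (\<lambda>x. x <#\<^bsub>G\<^esub> K i) ` carrier G)"

definition coset_translation ::
    "('a, 'b) monoid_scheme \<Rightarrow> 'i set \<Rightarrow> ('i \<Rightarrow> 'a set) \<Rightarrow> ('i \<Rightarrow> 'a) \<Rightarrow> 'i \<times> 'a set \<Rightarrow> 'i \<times> 'a set"
  where "coset_translation G I K t = (\<lambda>(i, C) \<in> coset_union G I K. (i, t i <#\<^bsub>G\<^esub> C))"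

abbreviation coset_action :: "('a, 'b) monoid_scheme \<Rightarrow> 'i set \<Rightarrow> ('i \<Rightarrow> 'a set) \<Rightarrow> 'a \<Rightarrow> 'i \<times> 'a set \<Rightarrow> 'i \<times> 'a set"
  where "coset_action G I K g \<equiv> coset_translation G I K (\<lambda>_. g)"

lemma finite_coset_union: "finite I \<Longrightarrow> finite (carrier G) \<Longrightarrow> finite (coset_union G I K)"
  by (simp add: coset_union_def)

lemma (in group) coset_translation_apply:
  assumes "i \<in> I" "x \<in> carrier G" "K i \<subseteq> carrier G" "t i \<in> carrier G"
  shows "coset_translation G I K t (i, x <# K i) = (i, (t i \<otimes> x) <# K i)"
  using assms by (simp add: coset_translation_def coset_union_def lcos_m_assoc)

lemma (in group) coset_translation_Bij:
  assumes K: "\<And>i. i \<in> I \<Longrightarrow> K i \<subseteq> carrier G" and t: "\<And>i. i \<in> I \<Longrightarrow> t i \<in> carrier G"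
  shows "coset_translation G I K t \<in> Bij (coset_union G I K)"
proof -
  let ?t' = "\<lambda>i. inv (t i)"
  have "bij_betw (coset_translation G I K t) (coset_union G I K) (coset_union G I K)"
  proof (rule bij_betw_byWitness[where f' = "coset_translation G I K ?t'"])
    show "\<forall>p\<in>coset_union G I K. coset_translation G I K ?t' (coset_translation G I K t p) = p"
      "\<forall>p\<in>coset_union G I K. coset_translation G I K t (coset_translation G I K ?t' p) = p"
      using K t by (auto simp: coset_union_def coset_translation_apply simp flip: m_assoc)
    show "coset_translation G I K t ` coset_union G I K \<subseteq> coset_union G I K"
      "coset_translation G I K ?t' ` coset_union G I K \<subseteq> coset_union G I K"
      using K t by (auto simp: coset_union_def coset_translation_apply)
  qed
  then show ?thesis
    by (simp add: Bij_def coset_translation_def)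
qed

lemma (in group) coset_translation_compose:
  assumes K: "\<And>i. i \<in> I \<Longrightarrow> K i \<subseteq> carrier G"
    and s: "\<And>i. i \<in> I \<Longrightarrow> s i \<in> carrier G" and t: "\<And>i. i \<in> I \<Longrightarrow> t i \<in> carrier G"
  shows "compose (coset_union G I K) (coset_translation G I K s) (coset_translation G I K t)
    = coset_translation G I K (\<lambda>i. s i \<otimes> t i)"
proof
  fix p show "compose (coset_union G I K) (coset_translation G I K s) (coset_translation G I K t) p
    = coset_translation G I K (\<lambda>i. s i \<otimes> t i) p"
  proof (cases "p \<in> coset_union G I K")
    case True
    then obtain i x where "i \<in> I" "x \<in> carrier G" "p = (i, x <# K i)"
      by (auto simp: coset_union_def)
    then show ?thesis
      using K s t by (simp add: compose_def coset_union_def coset_translation_apply m_assoc)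
  qed (simp add: compose_def coset_translation_def)
qed

lemma (in group) coset_action_group_action:
  assumes K: "\<And>i. i \<in> I \<Longrightarrow> K i \<subseteq> carrier G"
  shows "group_action G (coset_union G I K) (coset_action G I K)"
  unfolding group_action_def
proof (intro group_hom.intro group_hom_axioms.intro homI)
  fix g assume "g \<in> carrier G"
  then show "coset_action G I K g \<in> carrier (BijGroup (coset_union G I K))"
    using K by (simp add: BijGroup_def coset_translation_Bij)
next
  fix g h assume "g \<in> carrier G" and "h \<in> carrier G"
  then show "coset_action G I K (g \<otimes> h) =
      coset_action G I K g \<otimes>\<^bsub>BijGroup (coset_union G I K)\<^esub> coset_action G I K h"
    using K by (simp add: BijGroup_def coset_translation_Bij coset_translation_compose)
qed (simp_all add: is_group group_BijGroup)

lemma (in group) coset_translation_eq_coset_actionD: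
  assumes "i \<in> I" "subgroup (K i) G" "t i \<in> carrier G" "g \<in> carrier G"
    and eq: "coset_translation G I K t = coset_action G I K g"
  shows "inv g \<otimes> t i \<in> K i"
proof -
  have "(i, (t i \<otimes> \<one>) <# K i) = (i, (g \<otimes> \<one>) <# K i)"
    using assms subgroup.subset
    by (metis coset_translation_apply one_closed)
  then show ?thesis
    using assms by (simp add: l_coset_eq_iff)
qed

lemma (in group) coset_action_faithful:
  assumes K: "\<And>i. i \<in> I \<Longrightarrow> subgroup (K i) G"
    and trivial: "\<And>g. g \<in> carrier G \<Longrightarrow> \<forall>i\<in>I. g \<in> K i \<Longrightarrow> g = \<one>"
  shows "faithful_action G (coset_union G I K) (coset_action G I K)"
proof (intro faithful_action.intro faithful_action_axioms.intro inj_onI)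
  show "group_action G (coset_union G I K) (coset_action G I K)"
    using K by (simp add: coset_action_group_action subgroup.subset)
next
  fix g h assume g: "g \<in> carrier G" and h: "h \<in> carrier G"
    and eq: "coset_action G I K g = coset_action G I K h"
  then have "inv h \<otimes> g \<in> K i" if "i \<in> I" for i
    using coset_translation_eq_coset_actionD[of i I K "\<lambda>_. g" h] that K g h eq by simp
  then have "inv h \<otimes> g = \<one>"
    using g h trivial by simp
  then show "g = h"
    using g h by (metis inv_equality inv_inv inv_closed)
qed

lemma (in group) coset_translation_eq_coset_action_on_component:
  assumes K: "subgroup (K i) G" "K i \<subseteq> group_center G" and i: "i \<in> I"
    and t: "t i \<in> carrier G" and c: "c \<in> carrier G" and k: "inv c \<otimes> t i \<in> K i"
    and x: "x \<in> carrier G"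
  shows "coset_translation G I K t (i, x <# K i) = coset_action G I K c (i, x <# K i)"
proof -
  have Ki: "K i \<subseteq> carrier G"
    using K(1) by (rule subgroup.subset)
  have "(t i \<otimes> x) <# K i = c <# (((inv c \<otimes> t i) \<otimes> x) <# K i)"
    using Ki c t x by (simp add: lcos_m_assoc flip: m_assoc)
  also have "\<dots> = (c \<otimes> x) <# K i"
    using K k x Ki c by (simp add: l_coset_central_mult lcos_m_assoc)
  finally show ?thesis
    using Ki i t c x by (simp add: coset_translation_apply)
qed

lemma (in group) coset_translation_in_two_closure:
  assumes K: "\<And>i. i \<in> I \<Longrightarrow> subgroup (K i) G" "\<And>i. i \<in> I \<Longrightarrow> K i \<subseteq> group_center G"
    and t: "\<And>i. i \<in> I \<Longrightarrow> t i \<in> carrier G"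
    and agree: "\<And>i j. i \<in> I \<Longrightarrow> j \<in> I \<Longrightarrow> \<exists>c\<in>carrier G. inv c \<otimes> t i \<in> K i \<and> inv c \<otimes> t j \<in> K j"
  shows "coset_translation G I K t
    \<in> two_closure (coset_union G I K) (coset_action G I K ` carrier G)"
  unfolding two_closure_def
proof (intro CollectI conjI ballI)
  show "coset_translation G I K t \<in> Bij (coset_union G I K)"
    using K(1) t by (simp add: coset_translation_Bij subgroup.subset)
next
  fix \<alpha> \<beta> assume "\<alpha> \<in> coset_union G I K" "\<beta> \<in> coset_union G I K"
  then obtain i x j y where ij: "i \<in> I" "j \<in> I" and xy: "x \<in> carrier G" "y \<in> carrier G"
    and \<alpha>\<beta>: "\<alpha> = (i, x <# K i)" "\<beta> = (j, y <# K j)"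
    by (auto simp: coset_union_def)
  then obtain c where c: "c \<in> carrier G" "inv c \<otimes> t i \<in> K i" "inv c \<otimes> t j \<in> K j"
    using agree by blast
  have "coset_translation G I K t \<alpha> = coset_action G I K c \<alpha>"
    unfolding \<alpha>\<beta> using K(1,2)[OF ij(1)] ij(1) t[OF ij(1)] c(1,2) xy(1)
    by (rule coset_translation_eq_coset_action_on_component)
  moreover have "coset_translation G I K t \<beta> = coset_action G I K c \<beta>"
    unfolding \<alpha>\<beta> using K(1,2)[OF ij(2)] ij(2) t[OF ij(2)] c(1,3) xy(2)
    by (rule coset_translation_eq_coset_action_on_component)
  ultimately show "\<exists>g\<in>coset_action G I K ` carrier G.
      coset_translation G I K t \<alpha> = g \<alpha> \<and> coset_translation G I K t \<beta> = g \<beta>"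
    using c by blast
qed

lemma (in group) powers_subset_group_center:
  "x \<in> group_center G \<Longrightarrow> range (\<lambda>n::int. x [^] n) \<subseteq> group_center G"
  using subgroup_group_center subgroup_int_pow_closed by blast

lemma (in group) not_two_closed_group_if_coset_translation:
  assumes fin: "finite (carrier G)" "finite I"
    and K: "\<And>i. i \<in> I \<Longrightarrow> subgroup (K i) G" "\<And>i. i \<in> I \<Longrightarrow> K i \<subseteq> group_center G"
    and core: "\<And>g. g \<in> carrier G \<Longrightarrow> \<forall>i\<in>I. g \<in> K i \<Longrightarrow> g = \<one>"
    and t: "\<And>i. i \<in> I \<Longrightarrow> t i \<in> carrier G"
    and agree: "\<And>i j. i \<in> I \<Longrightarrow> j \<in> I \<Longrightarrow> \<exists>c\<in>carrier G. inv c \<otimes> t i \<in> K i \<and> inv c \<otimes> t j \<in> K j"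
    and not_global: "\<And>g. g \<in> carrier G \<Longrightarrow> \<exists>i\<in>I. inv g \<otimes> t i \<notin> K i"
  shows "\<not> two_closed_group G"
proof
  assume closed: "two_closed_group G"
  have "faithful_action G (coset_union G I K) (coset_action G I K)"
    using K(1) core by (rule coset_action_faithful)
  then have "two_closed_on (coset_union G I K) (coset_action G I K ` carrier G)"
    using finite_coset_union[OF fin(2,1)] closed by (rule faithful_action.two_closed_group_imp_two_closed_on)
  moreover have "coset_translation G I K t
      \<in> two_closure (coset_union G I K) (coset_action G I K ` carrier G)"
    using K t agree by (rule coset_translation_in_two_closure)
  ultimately obtain g where g: "g \<in> carrier G" and eq: "coset_translation G I K t = coset_action G I K g"
    unfolding two_closed_on_def by auto
  obtain i where i: "i \<in> I" "inv g \<otimes> t i \<notin> K i"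
    using not_global[OF g] by blast
  have "inv g \<otimes> t i \<in> K i"
    using i(1) K(1)[OF i(1)] t[OF i(1)] g eq by (rule coset_translation_eq_coset_actionD)
  with i(2) show False ..
qed

lemma (in group) not_two_closed_group_if_independent_central_pair:
  assumes fin: "finite (carrier G)" and a: "a \<in> group_center G" and b: "b \<in> group_center G"
    and disjoint: "range (\<lambda>n::int. a [^] n) \<inter> range (\<lambda>n::int. b [^] n) = {\<one>}"
    and a_notin: "a \<notin> range (\<lambda>n::int. (a \<otimes> b) [^] n)"
  shows "\<not> two_closed_group G"
proof -
  have ac: "a \<in> carrier G" and bc: "b \<in> carrier G"
    using a b by (simp_all add: group_center_def)
  define I where "I = {0, 1, 2 :: nat}"
  define K where "K i = range (\<lambda>n::int. ([a, b, a \<otimes> b] ! i) [^] n)" for i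
  define t where "t i = (if i = 2 then a else \<one>)" for i :: nat
  have gens: "[a, b, a \<otimes> b] ! i \<in> group_center G" if "i \<in> I" for i
    using that a b subgroup.m_closed[OF subgroup_group_center a b] by (auto simp: I_def)
  then have central: "K i \<subseteq> group_center G" if "i \<in> I" for i
    using that by (simp add: K_def powers_subset_group_center)
  have sub: "subgroup (K i) G" if "i \<in> I" for i
    using gens[OF that] by (simp add: K_def group_center_def subgroup_of_powers)
  have one: "\<one> \<in> K i" if "i \<in> I" for i
    using sub[OF that] by (rule subgroup.one_closed)
  have pow_mem: "x [^] n \<in> range (\<lambda>n::int. x [^] n)" for x and n :: int
    by blast
  have K0: "inv a \<in> K 0" and K1: "b \<in> K 1" and K2: "a \<otimes> b \<in> K 2"
    using pow_mem[of a "-1"] pow_mem[of b 1] pow_mem[of "a \<otimes> b" 1] ac bc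
    by (simp_all add: K_def int_pow_neg)
  have ab: "b \<otimes> a = a \<otimes> b"
    using a bc by (simp add: group_center_def)
  show ?thesis
  proof (rule not_two_closed_group_if_coset_translation[OF fin _ sub central])
    show "finite I" "\<And>i. t i \<in> carrier G"
      using ac by (simp_all add: I_def t_def)
  next
    fix g assume "g \<in> carrier G" "\<forall>i\<in>I. g \<in> K i"
    then show "g = \<one>"
      using disjoint by (auto simp: I_def K_def)
  next
    fix i j assume "i \<in> I" "j \<in> I"
    then consider "i \<noteq> 2" "j \<noteq> 2" | "i \<noteq> 1" "j \<noteq> 1" | "i \<noteq> 0" "j \<noteq> 0"
      by (auto simp: I_def)
    then show "\<exists>c\<in>carrier G. inv c \<otimes> t i \<in> K i \<and> inv c \<otimes> t j \<in> K j"
    proof cases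
      case 1
      then show ?thesis
        using \<open>i \<in> I\<close> \<open>j \<in> I\<close> one by (intro bexI[of _ \<one>]) (auto simp: t_def)
    next
      case 2
      then show ?thesis
        using \<open>i \<in> I\<close> \<open>j \<in> I\<close> one K0 ac by (intro bexI[of _ a]) (auto simp: t_def I_def)
    next
      case 3
      then show ?thesis
        using \<open>i \<in> I\<close> \<open>j \<in> I\<close> one K1 K2 ac bc ab by (intro bexI[of _ "inv b"]) (auto simp: t_def I_def)
    qed
  next
    fix g assume g: "g \<in> carrier G"
    show "\<exists>i\<in>I. inv g \<otimes> t i \<notin> K i"
    proof (rule ccontr)
      assume "\<not> (\<exists>i\<in>I. inv g \<otimes> t i \<notin> K i)"
      then have gK: "inv g \<otimes> t i \<in> K i" if "i \<in> I" for i
        using that by blast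
      have "inv g \<in> K 0" "inv g \<in> K 1" and gK2: "inv g \<otimes> a \<in> K 2"
        using gK[of 0] gK[of 1] gK[of 2] g by (simp_all add: I_def t_def)
      then have "inv g = \<one>"
        using disjoint by (auto simp: K_def)
      then show False
        using gK2 a_notin ac by (simp add: K_def)
    qed
  qed
qed

subsection \<open>Independent elements in non-cyclic finite abelian groups\<close>

lemma exists_coprime_divisor_gt:
  fixes r n :: nat
  assumes n: "0 < n" and r_ndvd: "\<not> r dvd n"
    and prime_step: "\<And>q. Factorial_Ring.prime q \<Longrightarrow> q dvd r \<Longrightarrow> r dvd q * n"
  shows "\<exists>m. m dvd n \<and> coprime r m \<and> n < r * m"
proof -
  have "r \<noteq> 0"
  proof
    assume "r = 0"
    with prime_step[of 2] n show False
      by simp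
  qed
  define g where "g = gcd r n"
  define r' where "r' = r div g"
  define m where "m = n div g"
  have g: "0 < g"
    using \<open>r \<noteq> 0\<close> by (simp add: g_def)
  have r: "r = r' * g" and n_eq: "n = m * g"
    by (simp_all add: r'_def m_def g_def)
  have coprime_r'm: "coprime r' m"
    unfolding r'_def m_def g_def using \<open>r \<noteq> 0\<close> by (intro div_gcd_coprime) simp
  have "r' \<noteq> 1"
  proof
    assume "r' = 1"
    then have "r = gcd r n"
      using r by (simp add: g_def)
    then have "r dvd n"
      by (metis gcd_dvd2)
    with r_ndvd show False ..
  qed
  have "coprime r m"
  proof (rule ccontr)
    assume "\<not> coprime r m"
    then obtain c where c: "c dvd r" "c dvd m" "\<not> is_unit c"
      by (rule not_coprimeE)
    then obtain q where q: "Factorial_Ring.prime q" "q dvd c"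
      using prime_factor_nat by auto
    have "r dvd q * n"
      using prime_step q c(1) dvd_trans by blast
    then have "r' * g dvd (q * m) * g"
      by (simp add: r n_eq mult.assoc)
    then have "r' dvd q * m"
      using g by simp
    then have "r' dvd q"
      using coprime_r'm by (simp add: coprime_dvd_mult_left_iff)
    then have "r' = q"
      using q(1) \<open>r' \<noteq> 1\<close> unfolding prime_nat_iff by blast
    then have "is_unit q"
      using coprime_r'm q(2) c(2) by (metis coprime_common_divisor dvd_refl dvd_trans)
    then show False
      using q(1) by (simp add: not_prime_unit)
  qed
  moreover have "n < r * m"
  proof -
    have "2 \<le> r'"
      using \<open>r' \<noteq> 1\<close> \<open>r \<noteq> 0\<close> r by (cases r') auto
    then have "2 * n \<le> r' * n"
      by simp
    then show ?thesis
      using n by (simp add: r n_eq)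
  qed
  moreover have "m dvd n"
    by (simp add: n_eq)
  ultimately show ?thesis
    by blast
qed

lemma (in group) ord_mult_of_coprime:
  assumes x: "x \<in> carrier G" and y: "y \<in> carrier G" and comm: "x \<otimes> y = y \<otimes> x"
    and cop: "coprime (ord x) (ord y)"
  shows "ord (x \<otimes> y) = ord x * ord y"
proof -
  have factor_dvd: "ord a dvd n"
    if a: "a \<in> carrier G" and b: "b \<in> carrier G" and ab: "a \<otimes> b = b \<otimes> a"
      and cop_ab: "coprime (ord a) (ord b)" and n: "(a \<otimes> b) [^] n = \<one>" for a b n
  proof -
    have "(a \<otimes> b) [^] (n * ord b) = ((a \<otimes> b) [^] n) [^] ord b"
      using a b by (simp add: nat_pow_pow)
    then have "a [^] (n * ord b) \<otimes> b [^] (n * ord b) = \<one>"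
      using n by (simp add: pow_mult_distrib[OF ab a b])
    moreover have "b [^] (n * ord b) = \<one>"
      using b by (simp add: pow_eq_id)
    ultimately have "a [^] (n * ord b) = \<one>"
      using a by simp
    then have "ord a dvd n * ord b"
      using a by (simp add: pow_eq_id)
    then show ?thesis
      using cop_ab by (simp add: coprime_dvd_mult_left_iff)
  qed
  have "(x \<otimes> y) [^] n = \<one> \<longleftrightarrow> ord x * ord y dvd n" for n
  proof
    assume "(x \<otimes> y) [^] n = \<one>"
    then have "ord x dvd n" "ord y dvd n"
      using factor_dvd[OF x y comm cop] factor_dvd[OF y x comm[symmetric]] cop comm
      by (simp_all add: coprime_commute)
    then show "ord x * ord y dvd n"
      using cop by (rule divides_mult)
  next
    assume "ord x * ord y dvd n"
    then have "x [^] n = \<one>" "y [^] n = \<one>"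
      using x y by (auto simp: pow_eq_id intro: dvd_mult_left dvd_mult_right)
    then show "(x \<otimes> y) [^] n = \<one>"
      using x y by (simp add: pow_mult_distrib[OF comm x y])
  qed
  then show ?thesis
    using x y by (simp add: ord_unique)
qed

lemma (in comm_group) ord_dvd_max_ord:
  assumes fin: "finite (carrier G)" and z: "z \<in> carrier G"
    and max: "\<And>y. y \<in> carrier G \<Longrightarrow> ord y \<le> ord z" and w: "w \<in> carrier G"
  shows "ord w dvd ord z"
  using w
proof (induction "ord w" arbitrary: w rule: less_induct)
  case less
  show ?case
  proof (rule ccontr)
    assume ndvd: "\<not> ord w dvd ord z"
    have ord_w: "0 < ord w" and ord_z: "0 < ord z"
      using ord_ge_1[OF fin less.prems] ord_ge_1[OF fin z] by simp_all
    have "ord w dvd q * ord z" if q: "Factorial_Ring.prime q" "q dvd ord w" for q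
    proof -
      have "ord (w [^] q) = ord w div q"
        using less.prems q by (simp add: ord_pow prime_gt_0_nat)
      moreover have "ord w div q < ord w"
        using ord_w prime_gt_1_nat[OF q(1)] by simp
      ultimately have "ord w div q dvd ord z"
        using less.hyps less.prems by (metis nat_pow_closed)
      then show ?thesis
        using q(2) by (metis dvd_div_mult_self mult.commute mult_dvd_mono dvd_refl)
    qed
    then obtain m where m: "m dvd ord z" "coprime (ord w) m" "ord z < ord w * m"
      using exists_coprime_divisor_gt[OF ord_z ndvd] by blast
    obtain k where k: "ord z = m * k"
      using m(1) by (rule dvdE)
    then have "ord (z [^] k) = m"
      using z ord_z by (simp add: ord_pow)
    then have "ord (w \<otimes> z [^] k) = ord w * m"
      using less.prems z m(2) by (simp add: ord_mult_of_coprime m_comm)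
    then show False
      using max[of "w \<otimes> z [^] k"] less.prems z m(3) by simp
  qed
qed

lemma (in group) mem_subgroup_if_coprime_int_pows:
  assumes H: "subgroup H G" and x: "x \<in> carrier G"
    and i: "x [^] (i::int) \<in> H" and j: "x [^] (j::int) \<in> H" and cop: "coprime i j"
  shows "x \<in> H"
proof -
  obtain u v :: int where "u * i + v * j = 1"
    using bezout_int[of i j] cop by (auto simp: coprime_iff_gcd_eq_1)
  then have "x = x [^] (i * u + j * v)"
    using x by (simp add: mult.commute)
  also have "\<dots> = (x [^] i) [^] u \<otimes> (x [^] j) [^] v"
    using x by (simp add: int_pow_pow int_pow_mult)
  also have "\<dots> \<in> H"
    using H i j by (simp add: subgroup.m_closed subgroup_int_pow_closed)
  finally show ?thesis .
qed

lemma (in group) exists_pow_not_mem_with_prime_pow_mem: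
  assumes H: "subgroup H G" and w: "w \<in> carrier G" "w \<notin> H" and ord_w: "ord w \<noteq> 0"
  shows "\<exists>(k::nat) (p::nat). Factorial_Ring.prime p \<and> w [^] k \<notin> H \<and> (w [^] k) [^] p \<in> H"
proof -
  define k where "k = (LEAST j::nat. 0 < j \<and> w [^] j \<in> H)"
  have "0 < k \<and> w [^] k \<in> H"
    unfolding k_def
    by (rule LeastI[where P = "\<lambda>j::nat. 0 < j \<and> w [^] j \<in> H" and k = "ord w"])
      (use ord_w w H in \<open>simp add: subgroup.one_closed\<close>)
  then have k: "0 < k" "w [^] k \<in> H"
    by simp_all
  have below_k: "w [^] j \<notin> H" if "0 < j" "j < k" for j
    using not_less_Least[of j "\<lambda>j::nat. 0 < j \<and> w [^] j \<in> H"] that by (simp add: k_def)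
  have "k \<noteq> 1"
    using k w by auto
  then obtain p where p: "Factorial_Ring.prime p" "p dvd k"
    using prime_factor_nat by blast
  then obtain d where d: "k = d * p"
    by (metis dvd_def mult.commute)
  have "0 < d" "d < k"
    using k(1) d prime_gt_1_nat[OF p(1)] by (auto simp: gr0I)
  then have "w [^] d \<notin> H" "(w [^] d) [^] p \<in> H"
    using below_k k(2) w d by (simp_all add: nat_pow_pow)
  with p show ?thesis
    by blast
qed

lemma (in group) prime_dvd_exponent_if_pow_mem:
  assumes H: "subgroup H G" and x: "x \<in> carrier G" "x \<notin> H"
    and p: "Factorial_Ring.prime p" "x [^] p \<in> H" and j: "x [^] (j::int) \<in> H"
  shows "int p dvd j"
proof (rule ccontr)
  assume "\<not> int p dvd j"
  then have "coprime (int p) j"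
    using p(1) by (simp add: prime_imp_coprime)
  moreover have "x [^] int p \<in> H"
    using p(2) by (simp add: int_pow_int)
  ultimately have "x \<in> H"
    using mem_subgroup_if_coprime_int_pows[OF H x(1) _ j] by blast
  with x(2) show False ..
qed

lemma (in comm_group) independent_pair_of_prime_order:
  assumes z: "z \<in> carrier G" and p: "Factorial_Ring.prime p" "p dvd ord z"
    and u: "u \<in> carrier G" "u [^] p = \<one>" "u \<notin> range (\<lambda>n::int. z [^] n)"
  shows "range (\<lambda>n::int. z [^] n) \<inter> range (\<lambda>n::int. u [^] n) = {\<one>}"
    and "z \<notin> range (\<lambda>n::int. (z \<otimes> u) [^] n)"
proof -
  define R where "R = range (\<lambda>n::int. z [^] n)"
  have R: "subgroup R G"
    unfolding R_def using z by (rule subgroup_of_powers)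
  have up: "u [^] int p = \<one>"
    using u(2) by (simp add: int_pow_int)
  have dvd_if_mem: "int p dvd j" if "u [^] j \<in> R" for j :: int
    using R u(1) u(3)[folded R_def] p(1) _ that
    by (rule prime_dvd_exponent_if_pow_mem) (simp add: u(2) subgroup.one_closed[OF R])
  have one_if_dvd: "u [^] j = \<one>" if "int p dvd j" for j :: int
  proof -
    from \<open>int p dvd j\<close> obtain k where "j = int p * k"
      by (rule dvdE)
    then have "u [^] j = (u [^] int p) [^] k"
      using u(1) by (simp add: int_pow_pow)
    also have "\<dots> = \<one>"
      using up by (simp add: int_pow_one)
    finally show ?thesis .
  qed
  show "R \<inter> range (\<lambda>n::int. u [^] n) = {\<one>}"
  proof (intro equalityI subsetI)
    fix x assume "x \<in> R \<inter> range (\<lambda>n::int. u [^] n)"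
    then obtain j :: int where "x = u [^] j" "u [^] j \<in> R"
      by blast
    then show "x \<in> {\<one>}"
      using one_if_dvd[OF dvd_if_mem] by simp
  next
    have "\<one> \<in> range (\<lambda>n::int. u [^] n)"
      by (rule range_eqI[of _ _ 0]) simp
    then show "x \<in> R \<inter> range (\<lambda>n::int. u [^] n)" if "x \<in> {\<one>}" for x
      using that subgroup.one_closed[OF R] by simp
  qed
  show "z \<notin> range (\<lambda>n::int. (z \<otimes> u) [^] n)"
  proof
    assume "z \<in> range (\<lambda>n::int. (z \<otimes> u) [^] n)"
    then obtain k :: int where "z = (z \<otimes> u) [^] k"
      by blast
    then have zk: "z = z [^] k \<otimes> u [^] k"
      using z u(1) by (simp add: int_pow_mult_distrib[OF m_comm[OF z u(1)]])
    then have "u [^] k = inv (z [^] k) \<otimes> z"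
      using z u(1) by (simp add: inv_solve_left)
    also have "\<dots> \<in> R"
      using R z by (metis R_def int_pow_1 rangeI subgroup.m_closed subgroup.m_inv_closed)
    finally have "int p dvd k"
      by (rule dvd_if_mem)
    then have "z [^] (1::int) = z [^] k"
      using zk one_if_dvd z by simp
    then have "int (ord z) dvd k - 1"
      by (simp only: int_pow_eq[OF z])
    moreover have "int p dvd int (ord z)"
      using p(2) by simp
    ultimately have "int p dvd k - (k - 1)"
      using \<open>int p dvd k\<close> by (meson dvd_diff dvd_trans)
    then show False
      using p(1) by simp
  qed
qed

lemma (in comm_group) exists_prime_order_not_mem_powers:
  assumes fin: "finite (carrier G)" and z: "z \<in> carrier G"
    and max: "\<And>y. y \<in> carrier G \<Longrightarrow> ord y \<le> ord z"
    and w: "w \<in> carrier G" "w \<notin> range (\<lambda>n::int. z [^] n)"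
  obtains p u where "Factorial_Ring.prime p" "p dvd ord z"
    "u \<in> carrier G" "u [^] p = \<one>" "u \<notin> range (\<lambda>n::int. z [^] n)"
proof -
  define R where "R = range (\<lambda>n::int. z [^] n)"
  have R: "subgroup R G"
    unfolding R_def using z by (rule subgroup_of_powers)
  obtain k p :: nat where p: "Factorial_Ring.prime p" and v: "w [^] k \<notin> R" "(w [^] k) [^] p \<in> R"
    using exists_pow_not_mem_with_prime_pow_mem[OF R w(1) w(2)[folded R_def]] ord_ge_1[OF fin w(1)]
    by auto
  define v where "v = w [^] k"
  have vc: "v \<in> carrier G"
    using w(1) by (simp add: v_def)
  obtain m :: int where vm: "v [^] int p = z [^] m"
    using v by (auto simp: v_def R_def int_pow_int)
  have vn: "v [^] int (ord z) = \<one>"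
    using ord_dvd_max_ord[OF fin z max vc] vc by (simp add: int_pow_int pow_eq_id)
  have "int p dvd int (ord z)"
    using R vc v(1)[folded v_def] p v(2)[folded v_def] _
    by (rule prime_dvd_exponent_if_pow_mem) (simp add: vn subgroup.one_closed[OF R])
  then obtain e where ne: "ord z = p * e"
    by (auto elim: dvdE)
  have "z [^] (m * int e) = \<one>"
    using vm vn z vc by (metis ne int_pow_pow of_nat_mult)
  then have "int p * int e dvd m * int e"
    using z by (simp add: int_pow_eq_id ne)
  then have "int p dvd m"
    using ne ord_ge_1[OF fin z] by simp
  then obtain m' where mm: "m = int p * m'"
    by (rule dvdE)
  define u where "u = v \<otimes> inv (z [^] m')"
  have uc: "u \<in> carrier G"
    using vc z by (simp add: u_def)
  have "u [^] int p = v [^] int p \<otimes> inv (z [^] (m' * int p))"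
    using vc z by (simp add: u_def int_pow_mult_distrib[OF m_comm] int_pow_inv int_pow_pow)
  then have "u [^] p = \<one>"
    using vm mm z by (simp add: int_pow_int mult.commute)
  moreover have "u \<notin> R"
  proof
    assume "u \<in> R"
    moreover have "z [^] m' \<in> R"
      by (simp add: R_def)
    ultimately have "u \<otimes> z [^] m' \<in> R"
      by (rule subgroup.m_closed[OF R])
    then show False
      using v(1) vc z by (simp add: u_def v_def m_assoc)
  qed
  moreover have "p dvd ord z"
    using ne by simp
  ultimately show ?thesis
    using that p uc by (simp add: R_def)
qed

lemma (in comm_group) independent_pair_if_not_cyclic:
  assumes fin: "finite (carrier G)" and not_cyclic: "\<not> cyclic_group G"
  obtains a b where "a \<in> carrier G" "b \<in> carrier G"
    "range (\<lambda>n::int. a [^] n) \<inter> range (\<lambda>n::int. b [^] n) = {\<one>}"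
    "a \<notin> range (\<lambda>n::int. (a \<otimes> b) [^] n)"
proof -
  have "Max (ord ` carrier G) \<in> ord ` carrier G"
    using fin by (intro Max_in) auto
  then obtain z where z: "z \<in> carrier G" "ord z = Max (ord ` carrier G)"
    by auto
  have max: "ord y \<le> ord z" if "y \<in> carrier G" for y
    using fin that z(2) by simp
  have "carrier G \<noteq> range (\<lambda>n::int. z [^] n)"
    using not_cyclic z(1) by (auto simp: cyclic_group)
  then obtain w where "w \<in> carrier G" "w \<notin> range (\<lambda>n::int. z [^] n)"
    using z(1) by auto
  then obtain p u where "Factorial_Ring.prime p" "p dvd ord z"
    "u \<in> carrier G" "u [^] p = \<one>" "u \<notin> range (\<lambda>n::int. z [^] n)"
    using exists_prime_order_not_mem_powers[OF fin z(1) max] by blast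
  then show ?thesis
    using that z(1) independent_pair_of_prime_order[of z p u] by blast
qed

subsection \<open>The centre of a 2-closed group\<close>

lemma (in group) comm_group_center: "comm_group (G\<lparr>carrier := group_center G\<rparr>)"
proof (rule group.group_comm_groupI)
  show "group (G\<lparr>carrier := group_center G\<rparr>)"
    using subgroup_group_center is_group by (rule subgroup.subgroup_is_group)
next
  fix x y assume "x \<in> carrier (G\<lparr>carrier := group_center G\<rparr>)"
    and "y \<in> carrier (G\<lparr>carrier := group_center G\<rparr>)"
  then have "x \<in> group_center G" "y \<in> carrier G"
    by (simp_all add: group_center_def)
  then show "x \<otimes>\<^bsub>G\<lparr>carrier := group_center G\<rparr>\<^esub> y = y \<otimes>\<^bsub>G\<lparr>carrier := group_center G\<rparr>\<^esub> x"
    unfolding group_center_def by simp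
qed

lemma (in group) cyclic_center_if_two_closed_group:
  assumes fin: "finite (carrier G)" and closed: "two_closed_group G"
  shows "cyclic_group (G\<lparr>carrier := group_center G\<rparr>)"
proof (rule ccontr)
  let ?Z = "G\<lparr>carrier := group_center G\<rparr>"
  assume "\<not> cyclic_group ?Z"
  moreover have "finite (carrier ?Z)"
    using fin by (auto simp: group_center_def)
  ultimately obtain a b where ab: "a \<in> group_center G" "b \<in> group_center G"
    and disjoint: "range (\<lambda>n::int. a [^]\<^bsub>?Z\<^esub> n) \<inter> range (\<lambda>n::int. b [^]\<^bsub>?Z\<^esub> n) = {\<one>}"
    and a_notin: "a \<notin> range (\<lambda>n::int. (a \<otimes> b) [^]\<^bsub>?Z\<^esub> n)"
    using comm_group.independent_pair_if_not_cyclic[OF comm_group_center] by auto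
  have "a \<otimes> b \<in> group_center G"
    using ab by (rule subgroup.m_closed[OF subgroup_group_center])
  then have "\<not> two_closed_group G"
    using disjoint a_notin
    by (intro not_two_closed_group_if_independent_central_pair[OF fin ab])
      (simp_all add: int_pow_consistent[OF subgroup_group_center] ab)
  with closed show False
    by contradiction
qed

theorem theorem1:
  fixes G :: "('a, 'b) monoid_scheme"
  assumes "group G" and "finite (carrier G)" and "two_closed_group G"
  shows "cyclic_group (G\<lparr>carrier := group_center G\<rparr>)"
  using assms by (rule group.cyclic_center_if_two_closed_group)

end
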